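(* Let $\varphi: S\to R$ be a ring morphism, $\mathbf{t}=\{t_1,\ldots,t_n\}$ a quasi-regular sequence in $R$ with $R/\mathbf{t}R$ a finitely generated projective $S$-module, and suppose $R$ admits a flat $S$-linear connection $\nabla^0$ as an $S[\mathbf{t}]$-module with $\operatorname{Ker}(\nabla^0)+\mathbf{t}R = R$. Let $(X,d_X)$ be a finite rank matrix factorisation over $R$ of $W\in S$, with fixed homogeneous $R$-basis, and let $\alpha$ be a degree $n$ $R$-linear map on $X$ such that the induced map $X/\mathbf{t}X\to X/\mathbf{t}X[n]$ is a morphism of linear factorisations. Then \[ \mathrm{str}_S\big(\alpha\circ\mathrm{At}_{S[\mathbf{t}]/S}(X)^n\big) = (-1)^n\,\mathrm{Res}_{R/S}\begin{bmatrix}\mathrm{str}_R\big(\alpha\cdot\mathrm{d}_{R/S}(d_X)^{\wedge n}\big)\\ t_1,\ldots,t_n\end{bmatrix}, \] where the supertrace on the left is of the induced $S$-linear endomorphism of $X/\mathbf{t}X$.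
   Context: All rings commutative. A finite rank matrix factorisation of $W$ over $R$ is a $\mathbb{Z}/2$-graded free finite rank $R$-module with odd $d_X$, $d_X^2=W\cdot1$. The supertrace of a homogeneous endomorphism $f$ of a finitely generated projective $\mathbb{Z}/2$-graded module is the trace of $Gf$, $G$ the grading operator $x\mapsto(-1)^{|x|}x$. $S[\mathbf{t}]$ is the polynomial ring in formal variables $t_i$; $\nabla^0: R\to R\otimes_{S[\mathbf{t}]}\Omega^1_{S[\mathbf{t}]/S}$ is $S$-linear with Leibniz rule, written $\nabla^0(r) = \sum_j\partial_j(r)\otimes\mathrm{d}t_j$; flat means the $\partial_j$ commute. For $r\in R$ the commutator $[\partial_j,r]$ (with $r$ acting by multiplication) is $S[\mathbf{t}]$-linear on $R$, hence induces an $S$-linear map on $R/\mathbf{t}R$. The residue symbol is \[\mathrm{Res}_{R/S}\begin{bmatrix}s\,\mathrm{d}r_1\cdots\mathrm{d}r_n\\t_1,\ldots,t_n\end{bmatrix} = \sum_{\tau\in S_n}\mathrm{sgn}(\tau)\,\mathrm{tr}_S\big(s[\partial_{\tau(1)},r_1]\cdots[\partial_{\tau(n)},r_n]\big)\in S,\] the trace being over $R/\mathbf{t}R$; it is independent of $\nabla^0$, depends only on $s\,\mathrm{d}r_1\wedge\cdots\wedge\mathrm{d}r_n\in\Omega^n_{R/S}$, and extends $S$-linearly to all of $\Omega^n_{R/S}$. In the basis, $d_X$ is a matrix over $R$, $\mathrm{d}_{R/S}(d_X)$ its entrywise Kähler differential (a matrix of 1-forms), and $\mathrm{str}_R(\alpha\cdot\mathrm{d}_{R/S}(d_X)^{\wedge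 n})\in\Omega^n_{R/S}$. The Atiyah class is $\mathrm{At}_{S[\mathbf{t}]/S}(X) = [d_X,\nabla_X]$ where $\nabla_X(r\xi_i)=\xi_i\otimes\nabla^0(r)$; its $n$-th iterate (using wedge product and trivialising $\Omega^n_{S[\mathbf{t}]/S}$ by $\mathrm{d}t_1\wedge\cdots\wedge\mathrm{d}t_n$) is a degree $n$ $S[\mathbf{t}]$-linear endomorphism of $X$, inducing an $S$-linear map on $X/\mathbf{t}X = X\otimes_RR/\mathbf{t}R$. *)

theory Defs
  imports "HOL-Combinatorics.Permutations" "HOL-Library.FuncSet" "HOL-Library.Function_Algebras"
begin

definition ring_morphism :: "('s::comm_ring_1 \<Rightarrow> 'r::comm_ring_1) \<Rightarrow> bool" where
  "ring_morphism \<phi> \<longleftrightarrow> \<phi> 1 = 1 \<and> (\<forall>a b. \<phi> (a + b) = \<phi> a + \<phi> b) \<and> (\<forall>a b. \<phi> (a * b) = \<phi> a * \<phi> b)"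

definition tideal :: "(nat \<Rightarrow> 'r::comm_ring_1) \<Rightarrow> nat \<Rightarrow> 'r set" where
  "tideal t n = {r. \<exists>c. r = (\<Sum>i<n. c i * t i)}"

definition expset :: "nat \<Rightarrow> nat \<Rightarrow> (nat \<Rightarrow> nat) set" where
  "expset n k = {e. (\<forall>i. n \<le> i \<longrightarrow> e i = 0) \<and> (\<Sum>i<n. e i) = k}"

definition tmono :: "(nat \<Rightarrow> 'r::comm_ring_1) \<Rightarrow> nat \<Rightarrow> (nat \<Rightarrow> nat) \<Rightarrow> 'r" where
  "tmono t n e = (\<Prod>i<n. t i ^ e i)"

(* quasi-regular: (R/I)[T] -> gr_I(R) is injective, i.e. a degree-k form in t
   lying in I^(k+1) has all its coefficients in I *)
definition quasi_regular :: "(nat \<Rightarrow> 'r::comm_ring_1) \<Rightarrow> nat \<Rightarrow> bool" where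
  "quasi_regular t n \<longleftrightarrow>
     (\<forall>k c d. (\<Sum>e\<in>expset n k. c e * tmono t n e) = (\<Sum>e\<in>expset n (Suc k). d e * tmono t n e)
        \<longrightarrow> (\<forall>e\<in>expset n k. c e \<in> tideal t n))"

definition is_dual_basis ::
  "('s::comm_ring_1 \<Rightarrow> 'm::ab_group_add \<Rightarrow> 'm) \<Rightarrow> 'm set \<Rightarrow> 'm set \<Rightarrow> ('m \<times> ('m \<Rightarrow> 's)) list \<Rightarrow> bool" where
  "is_dual_basis sc M K B \<longleftrightarrow>
     (\<forall>(x, f) \<in> set B. x \<in> M \<and> (\<forall>y\<in>M. \<forall>z\<in>M. f (y + z) = f y + f z)
        \<and> (\<forall>a. \<forall>y\<in>M. f (sc a y) = a * f y) \<and> (\<forall>y\<in>K. f y = 0)) \<and>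
     (\<forall>y\<in>M. y - (\<Sum>(x, f)\<leftarrow>B. sc (f y) x) \<in> K)"

(* M/K is a finitely generated projective S-module (dual basis lemma) *)
definition fg_projective :: "('s::comm_ring_1 \<Rightarrow> 'm::ab_group_add \<Rightarrow> 'm) \<Rightarrow> 'm set \<Rightarrow> 'm set \<Rightarrow> bool" where
  "fg_projective sc M K \<longleftrightarrow> (\<exists>B. is_dual_basis sc M K B)"

definition qtrace :: "('s::comm_ring_1 \<Rightarrow> 'm::ab_group_add \<Rightarrow> 'm) \<Rightarrow> 'm set \<Rightarrow> 'm set \<Rightarrow> ('m \<Rightarrow> 'm) \<Rightarrow> 's" where
  "qtrace sc M K g = (let B = (SOME B. is_dual_basis sc M K B) in (\<Sum>(x, f)\<leftarrow>B. f (g x)))"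

(* flat S-linear connection on R as S[t]-module, in components D j = \<partial>_j *)
definition is_connection :: "('s::comm_ring_1 \<Rightarrow> 'r::comm_ring_1) \<Rightarrow> (nat \<Rightarrow> 'r) \<Rightarrow> nat \<Rightarrow> (nat \<Rightarrow> 'r \<Rightarrow> 'r) \<Rightarrow> bool" where
  "is_connection \<phi> t n D \<longleftrightarrow>
     (\<forall>j<n. \<forall>x y. D j (x + y) = D j x + D j y) \<and>
     (\<forall>j<n. \<forall>s x. D j (\<phi> s * x) = \<phi> s * D j x) \<and>
     (\<forall>j<n. \<forall>k<n. \<forall>x. D j (t k * x) = t k * D j x + (if j = k then x else 0))"

definition flat_connection :: "nat \<Rightarrow> (nat \<Rightarrow> 'r \<Rightarrow> 'r) \<Rightarrow> bool" where
  "flat_connection n D \<longleftrightarrow> (\<forall>j<n. \<forall>k<n. \<forall>x. D j (D k x) = D k (D j x))"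

(* finite rank matrix factorisation of W (image in R) with homogeneous basis
   xi_0..xi_{N-1}, deg i = True iff xi_i is odd *)
definition is_mf :: "('s::comm_ring_1 \<Rightarrow> 'r::comm_ring_1) \<Rightarrow> 's \<Rightarrow> nat \<Rightarrow> (nat \<Rightarrow> bool) \<Rightarrow> (nat \<Rightarrow> nat \<Rightarrow> 'r) \<Rightarrow> bool" where
  "is_mf \<phi> W N deg d \<longleftrightarrow>
     (\<forall>a<N. \<forall>b<N. d a b \<noteq> 0 \<longrightarrow> deg a \<noteq> deg b) \<and>
     (\<forall>a<N. \<forall>b<N. (\<Sum>c<N. d a c * d c b) = (if a = b then \<phi> W else 0))"

(* X = R^N as coordinate vectors *)
definition vecs :: "nat \<Rightarrow> (nat \<Rightarrow> 'r::comm_ring_1) set" where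
  "vecs N = {v. \<forall>i. N \<le> i \<longrightarrow> v i = 0}"

definition vec_sc :: "('s::comm_ring_1 \<Rightarrow> 'r::comm_ring_1) \<Rightarrow> 's \<Rightarrow> (nat \<Rightarrow> 'r) \<Rightarrow> (nat \<Rightarrow> 'r)" where
  "vec_sc \<phi> s v = (\<lambda>i. \<phi> s * v i)"

definition tvecs :: "(nat \<Rightarrow> 'r::comm_ring_1) \<Rightarrow> nat \<Rightarrow> nat \<Rightarrow> (nat \<Rightarrow> 'r) set" where
  "tvecs t n N = {v \<in> vecs N. \<forall>i. v i \<in> tideal t n}"

definition matop :: "nat \<Rightarrow> (nat \<Rightarrow> nat \<Rightarrow> 'r::comm_ring_1) \<Rightarrow> (nat \<Rightarrow> 'r) \<Rightarrow> (nat \<Rightarrow> 'r)" where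
  "matop N A v = (\<lambda>a. if a < N then (\<Sum>b<N. A a b * v b) else 0)"

definition vecD :: "(nat \<Rightarrow> 'r \<Rightarrow> 'r) \<Rightarrow> nat \<Rightarrow> (nat \<Rightarrow> 'r) \<Rightarrow> (nat \<Rightarrow> 'r)" where
  "vecD D j v = (\<lambda>i. D j (v i))"

definition grading_op :: "(nat \<Rightarrow> bool) \<Rightarrow> (nat \<Rightarrow> 'r::comm_ring_1) \<Rightarrow> (nat \<Rightarrow> 'r)" where
  "grading_op deg v = (\<lambda>i. if deg i then - v i else v i)"

definition comp_ops :: "(nat \<Rightarrow> 'a \<Rightarrow> 'a) \<Rightarrow> nat \<Rightarrow> 'a \<Rightarrow> 'a" where
  "comp_ops ops n = foldr (\<circ>) (map ops [0..<n]) id"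

(* dt_j-component of At(X) = [d_X, nabla_X] = d_X nabla_X - nabla_X d_X *)
definition atiyah :: "nat \<Rightarrow> (nat \<Rightarrow> nat \<Rightarrow> 'r::comm_ring_1) \<Rightarrow> (nat \<Rightarrow> 'r \<Rightarrow> 'r) \<Rightarrow> nat \<Rightarrow> (nat \<Rightarrow> 'r) \<Rightarrow> (nat \<Rightarrow> 'r)" where
  "atiyah N d D j v = (\<lambda>i. matop N d (vecD D j v) i - vecD D j (matop N d v) i)"

(* At(X)^n, trivialised by dt_1 ^ ... ^ dt_n *)
definition atiyah_pow :: "nat \<Rightarrow> (nat \<Rightarrow> nat \<Rightarrow> 'r::comm_ring_1) \<Rightarrow> (nat \<Rightarrow> 'r \<Rightarrow> 'r) \<Rightarrow> nat \<Rightarrow> (nat \<Rightarrow> 'r) \<Rightarrow> (nat \<Rightarrow> 'r)" where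
  "atiyah_pow N d D n v = (\<lambda>i. \<Sum>\<tau> | \<tau> permutes {0..<n}.
       of_int (sign \<tau>) * comp_ops (\<lambda>k. atiyah N d D (\<tau> k)) n v i)"

definition dcomm :: "(nat \<Rightarrow> 'r::comm_ring_1 \<Rightarrow> 'r) \<Rightarrow> nat \<Rightarrow> 'r \<Rightarrow> 'r \<Rightarrow> 'r" where
  "dcomm D j r x = D j (r * x) - r * D j x"

(* Res_{R/S} [ s dr_1 ... dr_n / t_1,...,t_n ],  rs = [r_1,...,r_n] *)
definition res_mon :: "('s::comm_ring_1 \<Rightarrow> 'r::comm_ring_1) \<Rightarrow> (nat \<Rightarrow> 'r) \<Rightarrow> nat \<Rightarrow> (nat \<Rightarrow> 'r \<Rightarrow> 'r) \<Rightarrow> 'r \<Rightarrow> 'r list \<Rightarrow> 's" where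
  "res_mon \<phi> t n D s rs = (\<Sum>\<tau> | \<tau> permutes {0..<n}.
       of_int (sign \<tau>) * qtrace (\<lambda>a x. \<phi> a * x) UNIV (tideal t n)
          (\<lambda>x. s * comp_ops (\<lambda>k. dcomm D (\<tau> k) (rs ! k)) n x))"

(* Res_{R/S}[ str_R(alpha . d(d_X)^n) / t ], expanding the supertrace of the
   matrix product alpha . d(d_X) ^ ... ^ d(d_X) into monomials
   eps(i0) alpha_{i0 i1} d(d_{i1 i2}) ^ ... ^ d(d_{in i0}) and using S-linearity *)
definition res_str :: "('s::comm_ring_1 \<Rightarrow> 'r::comm_ring_1) \<Rightarrow> (nat \<Rightarrow> 'r) \<Rightarrow> nat \<Rightarrow> (nat \<Rightarrow> 'r \<Rightarrow> 'r)
     \<Rightarrow> nat \<Rightarrow> (nat \<Rightarrow> bool) \<Rightarrow> (nat \<Rightarrow> nat \<Rightarrow> 'r) \<Rightarrow> (nat \<Rightarrow> nat \<Rightarrow> 'r) \<Rightarrow> 's" where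
  "res_str \<phi> t n D N deg d \<alpha> =
     (let nx = (\<lambda>k. if k = n then 0 else Suc k) in
      \<Sum>p \<in> {0..n} \<rightarrow>\<^sub>E {0..<N}.
        (if deg (p 0) then -1 else 1) *
        res_mon \<phi> t n D (\<alpha> (p 0) (p (nx 0))) (map (\<lambda>k. d (p k) (p (nx k))) [1..<Suc n]))"

end

theory Submission
  imports Defs "HOL.Modules"
begin

text \<open>
  Entrywise, the Atiyah class acts on \<open>X = R\<^sup>N\<close> as \<open>At\<^sub>j = [d\<^sub>X, \<nabla>\<^sub>j] = -[\<partial>\<^sub>j, d\<^sub>X]\<close>, the operator
  matrix with entries \<open>-[\<partial>\<^sub>j, d\<^sub>i\<^sub>b]\<close>. A product of operator matrices is the operator matrix of
  sums over paths of composites of entries, so the sum of the diagonal entries of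
  \<open>G \<circ> \<alpha> \<circ> At\<^sup>n\<close> is \<open>(-1)\<^sup>n\<close> times the sum of the cyclic monomials
  \<open>\<epsilon>(p\<^sub>0) \<alpha>\<^sub>p\<^sub>0\<^sub>p\<^sub>1 [\<partial>, d\<^sub>p\<^sub>1\<^sub>p\<^sub>2] \<cdots> [\<partial>, d\<^sub>p\<^sub>n\<^sub>p\<^sub>0]\<close> that make up \<open>str\<^sub>R(\<alpha> \<cdot> d(d\<^sub>X)\<^sup>n)\<close>.
  The commutators \<open>[\<partial>\<^sub>j, r]\<close> are \<open>S[t]\<close>-linear, hence descend to \<open>R/tR\<close>, and since
  \<open>X/tX = (R/tR)\<^sup>N\<close> the trace of such an operator matrix on \<open>X/tX\<close> is the sum of the traces of
  its diagonal entries on \<open>R/tR\<close> (traces do not depend on the dual basis, so the coordinatewise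
  one may be used). \<open>S\<close>-linearity of the trace then produces the residue symbol.
\<close>

section \<open>Composites and path sums\<close>

lemma comp_ops_0 [simp]: "comp_ops ops 0 = id"
  by (simp add: comp_ops_def)

lemma comp_ops_Suc: "comp_ops ops (Suc m) = comp_ops ops m \<circ> ops m"
proof -
  have "foldr (\<circ>) (xs @ [ops m]) id = foldr (\<circ>) xs id \<circ> ops m" for xs :: "('a \<Rightarrow> 'a) list"
    by (induction xs) auto
  then show ?thesis by (simp add: comp_ops_def)
qed

lemma comp_ops_cong: "(\<And>k. k < m \<Longrightarrow> ops k = ops' k) \<Longrightarrow> comp_ops ops m = comp_ops ops' m"
  by (induction m) (auto simp: comp_ops_Suc)

lemma additive_comp_ops: "(\<And>k. k < m \<Longrightarrow> additive (ops k)) \<Longrightarrow> additive (comp_ops ops m)"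
  by (induction m) (auto simp: comp_ops_Suc additive_def)

lemma comp_ops_uminus:
  fixes x :: "'a::comm_ring_1"
  assumes "\<And>k. k < m \<Longrightarrow> additive (ops k)"
  shows "comp_ops (\<lambda>k x. - ops k x) m x = (-1) ^ m * comp_ops ops m x"
  using assms
proof (induction m arbitrary: x)
  case (Suc m)
  then have "additive (comp_ops ops m)" by (simp add: additive_comp_ops)
  then show ?case using Suc by (simp add: comp_ops_Suc additive.minus)
qed simp

definition opmat :: "nat \<Rightarrow> (nat \<Rightarrow> nat \<Rightarrow> 'a \<Rightarrow> 'a) \<Rightarrow> (nat \<Rightarrow> 'a) \<Rightarrow> nat \<Rightarrow> 'a::comm_monoid_add" where
  "opmat N A v = (\<lambda>i. if i < N then \<Sum>b<N. A i b (v b) else 0)"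

definition pathsum :: "nat \<Rightarrow> (nat \<Rightarrow> nat \<Rightarrow> nat \<Rightarrow> 'a \<Rightarrow> 'a) \<Rightarrow> nat \<Rightarrow> nat \<Rightarrow> nat \<Rightarrow> 'a \<Rightarrow> 'a::comm_monoid_add" where
  "pathsum N A m i j x = (\<Sum>q \<in> {0..m} \<rightarrow>\<^sub>E {0..<N}.
     if q 0 = i \<and> q m = j then comp_ops (\<lambda>k. A k (q k) (q (Suc k))) m x else 0)"

lemma sum_PiE_insert:
  assumes "finite S" "x \<notin> S"
  shows "(\<Sum>q\<in>Pi\<^sub>E (insert x S) T. F q) = (\<Sum>y\<in>T x. \<Sum>g\<in>Pi\<^sub>E S T. F (g(x := y)))"
proof -
  have inj: "inj_on (\<lambda>(y, g). g(x := y)) (T x \<times> Pi\<^sub>E S T)"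
    using assms(2) by (auto simp: inj_on_def fun_eq_iff PiE_iff extensional_def split: if_splits)
  show ?thesis
    unfolding PiE_insert_eq sum.reindex[OF inj] sum.cartesian_product by (simp add: split_def)
qed

lemma pathsum_0: "pathsum N A 0 i j x = (if i = j \<and> i < N then x else 0)"
proof -
  have "{0..0::nat} = insert 0 {}" by simp
  then have "pathsum N A 0 i j x = (\<Sum>y\<in>{0..<N}. if y = i \<and> y = j then x else 0)"
    unfolding pathsum_def
    by (simp only: sum_PiE_insert finite.emptyI empty_iff not_False_eq_True PiE_empty_domain
        fun_upd_same comp_ops_0 id_apply) simp
  then show ?thesis by (cases "i = j") (auto simp: sum.delta intro: sum.neutral)
qed

lemma pathsum_Suc:
  assumes "j < N"
  shows "pathsum N A (Suc m) i j x = (\<Sum>l<N. pathsum N A m i l (A m l j x))"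
proof -
  let ?c = "\<lambda>g. comp_ops (\<lambda>k. A k (g k) (g (Suc k))) m"
  let ?PE = "{0..m} \<rightarrow>\<^sub>E {0..<N}"
  have extend: "comp_ops (\<lambda>k. A k ((g(Suc m := y)) k) ((g(Suc m := y)) (Suc k))) (Suc m) x =
      ?c g (A m (g m) y x)" for g y
    by (simp add: comp_ops_Suc cong: comp_ops_cong)
  have ins: "{0..Suc m} = insert (Suc m) {0..m}" by auto
  have "pathsum N A (Suc m) i j x =
      (\<Sum>y<N. \<Sum>g\<in>?PE. if g 0 = i \<and> y = j then ?c g (A m (g m) y x) else 0)"
    unfolding pathsum_def ins
    by (subst sum_PiE_insert, simp, simp, simp only: extend) (simp add: atLeast0LessThan)
  also have "\<dots> = (\<Sum>g\<in>?PE. if g 0 = i then ?c g (A m (g m) j x) else 0)"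
    using assms by (subst sum.swap, intro sum.cong refl) (simp add: if_distrib sum.delta' cong: if_cong)
  also have "\<dots> = (\<Sum>g\<in>?PE. \<Sum>l<N. if g 0 = i \<and> g m = l then ?c g (A m l j x) else 0)"
    by (intro sum.cong refl) (auto simp: PiE_iff sum.delta cong: if_cong)
  also have "\<dots> = (\<Sum>l<N. pathsum N A m i l (A m l j x))"
    unfolding pathsum_def by (rule sum.swap)
  finally show ?thesis .
qed

lemma additive_pathsum:
  assumes "\<And>k a b. k < m \<Longrightarrow> additive (A k a b)"
  shows "additive (pathsum N A m i j)"
proof
  fix x y
  have "additive (comp_ops (\<lambda>k. A k (q k) (q (Suc k))) m)" for q
    using assms by (intro additive_comp_ops) auto
  then show "pathsum N A m i j (x + y) = pathsum N A m i j x + pathsum N A m i j y"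
    unfolding pathsum_def by (simp add: additive.add sum.distrib[symmetric] if_distrib cong: if_cong)
qed

lemma pathsum_uminus:
  fixes x :: "'a::comm_ring_1"
  assumes "\<And>k a b. k < m \<Longrightarrow> additive (A k a b)"
  shows "pathsum N (\<lambda>k a b x. - A k a b x) m i j x = (-1) ^ m * pathsum N A m i j x"
  using assms unfolding pathsum_def
  by (simp add: comp_ops_uminus sum_distrib_left if_distrib[where f="\<lambda>x. _ * x"] cong: if_cong)

lemma comp_ops_opmat:
  assumes "\<And>k a b. k < m \<Longrightarrow> additive (A k a b)" and "i < N"
  shows "comp_ops (\<lambda>k. opmat N (A k)) m v i = opmat N (pathsum N A m) v i"
  using assms
proof (induction m arbitrary: v)
  case 0
  then show ?case by (simp add: opmat_def pathsum_0 sum.delta)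
next
  case (Suc m)
  have add: "additive (pathsum N A m i l)" for l
    using Suc.prems by (intro additive_pathsum) auto
  have "comp_ops (\<lambda>k. opmat N (A k)) (Suc m) v i = opmat N (pathsum N A m) (opmat N (A m) v) i"
    using Suc by (simp add: comp_ops_Suc)
  also have "\<dots> = (\<Sum>l<N. \<Sum>b<N. pathsum N A m i l (A m l b (v b)))"
    using Suc.prems add by (simp add: opmat_def additive.sum)
  also have "\<dots> = opmat N (pathsum N A (Suc m)) v i"
    using Suc.prems by (subst sum.swap) (simp add: opmat_def pathsum_Suc)
  finally show ?case .
qed

section \<open>Traces on quotient modules\<close>

lemma sum_list_sum_swap:
  "(\<Sum>a\<leftarrow>xs. \<Sum>i\<in>I. F a i) = (\<Sum>i\<in>I. \<Sum>a\<leftarrow>xs. (F a i :: 'b::comm_monoid_add))"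
  by (induction xs) (auto simp: sum.distrib)

lemma sum_list_map_swap:
  "(\<Sum>a\<leftarrow>xs. \<Sum>b\<leftarrow>ys. F a b) = (\<Sum>b\<leftarrow>ys. \<Sum>a\<leftarrow>xs. (F a b :: 'c::comm_monoid_add))"
  by (induction xs) (auto simp: sum_list_addf)

lemma sum_list_additive_on:
  fixes f :: "'m::ab_group_add \<Rightarrow> 'b::ab_group_add"
  assumes "0 \<in> M" "\<forall>x\<in>M. \<forall>y\<in>M. x + y \<in> M" "\<forall>x\<in>M. \<forall>y\<in>M. f (x + y) = f x + f y"
    and "\<forall>a\<in>set xs. g a \<in> M"
  shows "sum_list (map g xs) \<in> M \<and> f (sum_list (map g xs)) = (\<Sum>a\<leftarrow>xs. f (g a))"
  using assms(4)
proof (induction xs)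
  case Nil
  have "f (0 + 0) = f 0 + f 0" using assms(1,3) by blast
  then show ?case using assms(1) by simp
qed (use assms(2,3) in auto)

lemma sum_list_concat: "sum_list (concat xss) = (\<Sum>xs\<leftarrow>xss. sum_list xs :: 'a::monoid_add)"
  by (induction xss) auto

lemma sum_list_apply: "sum_list (map F xs) i = (\<Sum>x\<leftarrow>xs. F x i)"
  by (induction xs) auto

lemma sum_apply: "(\<Sum>a\<in>A. F a) i = (\<Sum>a\<in>A. F a i)"
  by (induction A rule: infinite_finite_induct) auto

definition quotient_module :: "('s \<Rightarrow> 'm::ab_group_add \<Rightarrow> 'm) \<Rightarrow> 'm set \<Rightarrow> 'm set \<Rightarrow> bool" where
  "quotient_module sc M K \<longleftrightarrow>
     0 \<in> M \<and> (\<forall>x\<in>M. \<forall>y\<in>M. x + y \<in> M) \<and> (\<forall>a. \<forall>x\<in>M. sc a x \<in> M) \<and> K \<subseteq> M"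

definition quotient_endo :: "('s \<Rightarrow> 'm::ab_group_add \<Rightarrow> 'm) \<Rightarrow> 'm set \<Rightarrow> 'm set \<Rightarrow> ('m \<Rightarrow> 'm) \<Rightarrow> bool" where
  "quotient_endo sc M K g \<longleftrightarrow> g ` M \<subseteq> M \<and> g ` K \<subseteq> K \<and>
     (\<forall>x\<in>M. \<forall>y\<in>M. g (x + y) = g x + g y) \<and> (\<forall>a. \<forall>x\<in>M. g (sc a x) = sc a (g x))"

lemma dual_basis_expand:
  fixes f :: "'m::ab_group_add \<Rightarrow> 's::comm_ring_1"
  assumes M: "quotient_module sc M K" and B: "is_dual_basis sc M K B"
    and f_add: "\<forall>x\<in>M. \<forall>y\<in>M. f (x + y) = f x + f y"
    and f_sc: "\<forall>a. \<forall>x\<in>M. f (sc a x) = a * f x"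
    and f_K: "\<forall>x\<in>K. f x = 0"
    and y: "y \<in> M"
  shows "f y = (\<Sum>(x, h)\<leftarrow>B. h y * f x)"
proof -
  let ?s = "\<Sum>(x, h)\<leftarrow>B. sc (h y) x"
  have B_mem: "\<forall>(x, h)\<in>set B. sc (h y) x \<in> M"
    using B M unfolding is_dual_basis_def quotient_module_def by auto
  have s: "?s \<in> M \<and> f ?s = (\<Sum>(x, h)\<leftarrow>B. f (sc (h y) x))"
    using sum_list_additive_on[where g = "\<lambda>(x, h). sc (h y) x" and xs = B and f = f and M = M]
      M f_add B_mem unfolding quotient_module_def by (simp add: case_prod_unfold)
  have k: "y - ?s \<in> K"
    using B y unfolding is_dual_basis_def by blast
  with M have "y - ?s \<in> M" unfolding quotient_module_def by blast
  with f_add s have "f y = f (y - ?s) + f ?s"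
    by (metis diff_add_cancel)
  also have "\<dots> = (\<Sum>(x, h)\<leftarrow>B. f (sc (h y) x))"
    using f_K k s by simp
  also have "\<dots> = (\<Sum>(x, h)\<leftarrow>B. h y * f x)"
    using f_sc B unfolding is_dual_basis_def
    by (intro arg_cong[where f = sum_list] map_cong) auto
  finally show ?thesis .
qed

lemma dual_basis_trace_eq:
  assumes M: "quotient_module sc M K"
    and B: "is_dual_basis sc M K B" and B': "is_dual_basis sc M K B'"
    and g: "quotient_endo sc M K g"
  shows "(\<Sum>(x, f)\<leftarrow>B. f (g x)) = (\<Sum>(x, f)\<leftarrow>B'. f (g x))"
proof -
  have functional: "x \<in> M \<and> (\<forall>y\<in>M. \<forall>z\<in>M. f (y + z) = f y + f z) \<and>
      (\<forall>a. \<forall>y\<in>M. f (sc a y) = a * f y) \<and> (\<forall>y\<in>K. f y = 0)"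
    if "is_dual_basis sc M K C" "(x, f) \<in> set C" for C x f
    using that unfolding is_dual_basis_def by auto
  have g_M: "g y \<in> M" and g_sc: "g (sc a y) = sc a (g y)" if "y \<in> M" for y a
    using g that unfolding quotient_endo_def by auto
  have g_add: "g (y + z) = g y + g z" if "y \<in> M" "z \<in> M" for y z
    using g that unfolding quotient_endo_def by auto
  have g_K: "g k \<in> K" if "k \<in> K" for k
    using g that unfolding quotient_endo_def by auto
  (* expand the functionals of B along B' and those of B' along B *)
  have "(\<Sum>(x, f)\<leftarrow>B. f (g x)) = (\<Sum>(x, f)\<leftarrow>B. \<Sum>(x', f')\<leftarrow>B'. f' x * f (g x'))"
  proof (intro arg_cong[where f = sum_list] map_cong refl, clarify)
    fix x f assume "(x, f) \<in> set B"
    note f = functional[OF B this]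
    show "f (g x) = (\<Sum>(x', f')\<leftarrow>B'. f' x * f (g x'))"
    proof (rule dual_basis_expand[OF M B', where f = "f \<circ> g", unfolded comp_def])
      show "\<forall>y\<in>M. \<forall>z\<in>M. f (g (y + z)) = f (g y) + f (g z)"
        using f g_M g_add by simp
      show "\<forall>a. \<forall>y\<in>M. f (g (sc a y)) = a * f (g y)"
        using f g_M g_sc by simp
      show "\<forall>y\<in>K. f (g y) = 0"
        using f g_K by simp
    qed (use f in simp)
  qed
  also have "\<dots> = (\<Sum>(x', f')\<leftarrow>B'. \<Sum>(x, f)\<leftarrow>B. f (g x') * f' x)"
    unfolding split_def by (subst sum_list_map_swap) (simp add: mult.commute)
  also have "\<dots> = (\<Sum>(x', f')\<leftarrow>B'. f' (g x'))"
  proof (intro arg_cong[where f = sum_list] map_cong refl, clarify)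
    fix x' f' assume "(x', f') \<in> set B'"
    with functional[OF B'] g_M show "(\<Sum>(x, f)\<leftarrow>B. f (g x') * f' x) = f' (g x')"
      by (intro dual_basis_expand[OF M B, symmetric]) auto
  qed
  finally show ?thesis .
qed

lemma qtrace_eq_dual_basis:
  assumes "quotient_module sc M K" "is_dual_basis sc M K B" "quotient_endo sc M K g"
  shows "qtrace sc M K g = (\<Sum>(x, f)\<leftarrow>B. f (g x))"
  unfolding qtrace_def Let_def
  using assms someI[of "is_dual_basis sc M K" B] by (blast intro: dual_basis_trace_eq)

lemma is_dual_basis_some:
  "fg_projective sc M K \<Longrightarrow> is_dual_basis sc M K (SOME B. is_dual_basis sc M K B)"
  unfolding fg_projective_def by (rule someI_ex)

lemma qtrace_sum:
  assumes "fg_projective sc UNIV K"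
  shows "qtrace sc UNIV K (\<lambda>x. \<Sum>i\<in>I. h i x) = (\<Sum>i\<in>I. qtrace sc UNIV K (h i))"
proof -
  define B where "B = (SOME B. is_dual_basis sc UNIV K B)"
  have "is_dual_basis sc UNIV K B"
    unfolding B_def using assms by (rule is_dual_basis_some)
  then have "additive f" if "(x, f) \<in> set B" for x f
    using that unfolding is_dual_basis_def by unfold_locales auto
  then have "qtrace sc UNIV K (\<lambda>x. \<Sum>i\<in>I. h i x) = (\<Sum>(x, f)\<leftarrow>B. \<Sum>i\<in>I. f (h i x))"
    unfolding qtrace_def Let_def B_def[symmetric]
    by (intro arg_cong[where f = sum_list] map_cong) (auto simp: additive.sum)
  then show ?thesis
    unfolding qtrace_def Let_def B_def[symmetric] split_def by (simp add: sum_list_sum_swap)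
qed

lemma qtrace_scale:
  assumes "fg_projective sc UNIV K"
  shows "qtrace sc UNIV K (\<lambda>x. sc s (h x)) = s * qtrace sc UNIV K h"
proof -
  define B where "B = (SOME B. is_dual_basis sc UNIV K B)"
  have "is_dual_basis sc UNIV K B"
    unfolding B_def using assms by (rule is_dual_basis_some)
  then have "qtrace sc UNIV K (\<lambda>x. sc s (h x)) = (\<Sum>(x, f)\<leftarrow>B. s * f (h x))"
    unfolding qtrace_def Let_def B_def[symmetric] is_dual_basis_def
    by (intro arg_cong[where f = sum_list] map_cong) auto
  then show ?thesis
    unfolding qtrace_def Let_def B_def[symmetric] split_def by (simp add: sum_list_const_mult)
qed

section \<open>Endomorphisms of \<open>R/tR\<close>\<close>

lemma tideal_0: "0 \<in> tideal t n"
  unfolding tideal_def by (auto intro: exI[of _ "\<lambda>_. 0"])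

lemma tideal_add: "x \<in> tideal t n \<Longrightarrow> y \<in> tideal t n \<Longrightarrow> x + y \<in> tideal t n"
  unfolding tideal_def
  by (auto simp: sum.distrib[symmetric] distrib_right intro: exI[of _ "\<lambda>i. _ i + _ i"])

lemma tideal_mult: "x \<in> tideal t n \<Longrightarrow> r * x \<in> tideal t n"
  unfolding tideal_def by (auto simp: sum_distrib_left mult.assoc intro: exI[of _ "\<lambda>i. r * _ i"])

lemma tideal_sum: "(\<And>i. i \<in> I \<Longrightarrow> F i \<in> tideal t n) \<Longrightarrow> (\<Sum>i\<in>I. F i) \<in> tideal t n"
  by (induction I rule: infinite_finite_induct) (auto simp: tideal_0 tideal_add)

abbreviation tideal_endo ::
  "('s::comm_ring_1 \<Rightarrow> 'r::comm_ring_1) \<Rightarrow> (nat \<Rightarrow> 'r) \<Rightarrow> nat \<Rightarrow> ('r \<Rightarrow> 'r) \<Rightarrow> bool" where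
  "tideal_endo \<phi> t n \<equiv> quotient_endo (\<lambda>a x. \<phi> a * x) UNIV (tideal t n)"

lemma tideal_endo_iff:
  "tideal_endo \<phi> t n h \<longleftrightarrow>
     additive h \<and> (\<forall>s x. h (\<phi> s * x) = \<phi> s * h x) \<and> (\<forall>x\<in>tideal t n. h x \<in> tideal t n)"
  unfolding quotient_endo_def additive_def by auto

lemma tideal_endo_comp_ops:
  "(\<And>k. k < m \<Longrightarrow> tideal_endo \<phi> t n (ops k)) \<Longrightarrow> tideal_endo \<phi> t n (comp_ops ops m)"
  by (induction m) (auto simp: comp_ops_Suc tideal_endo_iff additive_def)

lemma tideal_endo_sum:
  "(\<And>i. i \<in> I \<Longrightarrow> tideal_endo \<phi> t n (h i)) \<Longrightarrow> tideal_endo \<phi> t n (\<lambda>x. \<Sum>i\<in>I. h i x)"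
  unfolding tideal_endo_iff
  by (auto simp: additive_def sum.distrib sum_distrib_left intro: tideal_sum)

lemma tideal_endo_mult: "tideal_endo \<phi> t n h \<Longrightarrow> tideal_endo \<phi> t n (\<lambda>x. r * h x)"
  unfolding tideal_endo_iff additive_def by (auto simp: distrib_left tideal_mult mult.left_commute)

lemma tideal_endo_pathsum:
  assumes "\<And>k a b. k < m \<Longrightarrow> tideal_endo \<phi> t n (A k a b)"
  shows "tideal_endo \<phi> t n (pathsum N A m i j)"
proof -
  have "tideal_endo \<phi> t n (comp_ops (\<lambda>k. A k (q k) (q (Suc k))) m)" for q
    using assms by (intro tideal_endo_comp_ops)
  then have "tideal_endo \<phi> t n (\<lambda>x. if P then comp_ops (\<lambda>k. A k (q k) (q (Suc k))) m x else 0)" for P q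
    by (cases P) (simp_all add: tideal_endo_iff additive_def tideal_0)
  then show ?thesis
    unfolding pathsum_def by (intro tideal_endo_sum)
qed

(* The Leibniz terms of \<open>\<partial>\<^sub>j (t\<^sub>k \<cdot> _)\<close> cancel in the commutator. *)
lemma dcomm_mult_t:
  assumes "is_connection \<phi> t n D" "j < n" "k < n"
  shows "dcomm D j r (c * t k) = t k * dcomm D j r c"
proof -
  have "D j (t k * y) = t k * D j y + (if j = k then y else 0)" for y
    using assms unfolding is_connection_def by blast
  from this[of "r * c"] this[of c] show ?thesis
    unfolding dcomm_def by (simp add: algebra_simps)
qed

lemma tideal_endo_dcomm:
  assumes con: "is_connection \<phi> t n D" and j: "j < n"
  shows "tideal_endo \<phi> t n (dcomm D j r)"
proof -
  have "additive (D j)"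
    using con j unfolding is_connection_def additive_def by blast
  then have "additive (dcomm D j r)"
    unfolding additive_def dcomm_def by (simp add: distrib_left)
  moreover have "dcomm D j r (\<phi> s * x) = \<phi> s * dcomm D j r x" for s x
    using con j unfolding is_connection_def dcomm_def
    by (metis mult.left_commute right_diff_distrib)
  moreover have "dcomm D j r x \<in> tideal t n" if x_in: "x \<in> tideal t n" for x
  proof -
    obtain c where x: "x = (\<Sum>i<n. c i * t i)"
      using x_in unfolding tideal_def by auto
    have "dcomm D j r x = (\<Sum>i<n. dcomm D j r (c i) * t i)"
      unfolding x additive.sum[OF \<open>additive (dcomm D j r)\<close>]
      using dcomm_mult_t[OF con j] by (simp add: mult.commute)
    then show ?thesis unfolding tideal_def by auto
  qed
  ultimately show ?thesis unfolding tideal_endo_iff by blast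
qed

lemma ring_morphism_0: "ring_morphism \<phi> \<Longrightarrow> \<phi> 0 = 0"
  unfolding ring_morphism_def by (metis add_0 add_cancel_right_right)

lemma ring_morphism_of_int:
  assumes "ring_morphism \<phi>"
  shows "\<phi> (of_int z) = of_int z"
proof -
  have of_nat: "\<phi> (of_nat k) = of_nat k" for k
    using assms by (induction k) (auto simp: ring_morphism_0 ring_morphism_def)
  have "\<phi> (- a) = - \<phi> a" for a
    using assms ring_morphism_0[OF assms] unfolding ring_morphism_def
    by (metis add.right_inverse add_eq_0_iff)
  with of_nat show ?thesis
    by (cases z rule: int_cases2) auto
qed

lemma qtrace_of_int_mult:
  assumes "ring_morphism \<phi>" "fg_projective (\<lambda>a x. \<phi> a * x) UNIV K"
  shows "qtrace (\<lambda>a x. \<phi> a * x) UNIV K (\<lambda>x. of_int z * h x) =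
    of_int z * qtrace (\<lambda>a x. \<phi> a * x) UNIV K h"
  using qtrace_scale[OF assms(2), of "of_int z" h] by (simp add: ring_morphism_of_int[OF assms(1)])

section \<open>The free module \<open>X/tX\<close>\<close>

lemma quotient_module_vecs: "quotient_module (vec_sc \<phi>) (vecs N) (tvecs t n N)"
  unfolding quotient_module_def vecs_def vec_sc_def tvecs_def by auto

definition vecs_dual_basis ::
  "nat \<Rightarrow> ('r \<times> ('r \<Rightarrow> 's)) list \<Rightarrow> ((nat \<Rightarrow> 'r::zero) \<times> ((nat \<Rightarrow> 'r) \<Rightarrow> 's)) list" where
  "vecs_dual_basis N B = concat (map (\<lambda>c. map (\<lambda>(y, f). (0(c := y), \<lambda>v. f (v c))) B) [0..<N])"

lemma sum_list_vecs_dual_basis: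
  "(\<Sum>(x, g)\<leftarrow>vecs_dual_basis N B. F x g) = (\<Sum>c<N. \<Sum>(y, f)\<leftarrow>B. F (0(c := y)) (\<lambda>v. f (v c)))"
  unfolding vecs_dual_basis_def
  by (simp add: sum_list_concat map_concat comp_def split_def interv_sum_list_conv_sum_set_nat
      atLeast0LessThan)

lemma is_dual_basis_vecs:
  assumes B: "is_dual_basis (\<lambda>a x. \<phi> a * x) UNIV (tideal t n) B"
  shows "is_dual_basis (vec_sc \<phi>) (vecs N) (tvecs t n N) (vecs_dual_basis N B)"
proof -
  have functional: "(\<forall>y z. f (y + z) = f y + f z) \<and> (\<forall>a y. f (\<phi> a * y) = a * f y) \<and>
      (\<forall>y\<in>tideal t n. f y = 0)" if "(y, f) \<in> set B" for y f
    using B that unfolding is_dual_basis_def by auto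
  have "x \<in> vecs N \<and> (\<forall>u\<in>vecs N. \<forall>v\<in>vecs N. g (u + v) = g u + g v) \<and>
      (\<forall>a. \<forall>u\<in>vecs N. g (vec_sc \<phi> a u) = a * g u) \<and> (\<forall>u\<in>tvecs t n N. g u = 0)"
    if "(x, g) \<in> set (vecs_dual_basis N B)" for x g
    using that functional unfolding vecs_dual_basis_def
    by (auto simp: vecs_def vec_sc_def tvecs_def)
  moreover have "v - (\<Sum>(x, g)\<leftarrow>vecs_dual_basis N B. vec_sc \<phi> (g v) x) \<in> tvecs t n N"
    if v: "v \<in> vecs N" for v
  proof -
    let ?w = "\<Sum>(x, g)\<leftarrow>vecs_dual_basis N B. vec_sc \<phi> (g v) x"
    have w: "?w i = (if i < N then \<Sum>(y, f)\<leftarrow>B. \<phi> (f (v i)) * y else 0)" for i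
      unfolding sum_list_vecs_dual_basis sum_apply sum_list_apply
      by (simp add: split_def vec_sc_def sum_list_sum_swap[symmetric]
          if_distrib[where f = "\<lambda>x. _ * x"] sum.delta cong: if_cong)
    have "v i - ?w i \<in> tideal t n" for i
      using B v w unfolding is_dual_basis_def vecs_def by (cases "i < N") (auto simp: tideal_0)
    moreover have "v - ?w \<in> vecs N"
      using v w by (simp add: vecs_def)
    ultimately show ?thesis unfolding tvecs_def by simp
  qed
  ultimately show ?thesis unfolding is_dual_basis_def by blast
qed

lemma quotient_endo_opmat:
  assumes "\<And>c b. tideal_endo \<phi> t n (H c b)"
  shows "quotient_endo (vec_sc \<phi>) (vecs N) (tvecs t n N) (opmat N H)"
  using assms unfolding quotient_endo_def tvecs_def vecs_def opmat_def vec_sc_def tideal_endo_iff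
  by (auto simp: additive_def sum.distrib sum_distrib_left fun_eq_iff image_subset_iff tideal_0
      intro!: tideal_sum)

lemma qtrace_opmat:
  fixes \<phi> :: "'s::comm_ring_1 \<Rightarrow> 'r::comm_ring_1"
  assumes R: "fg_projective (\<lambda>a x. \<phi> a * x) UNIV (tideal t n)"
    and H: "\<And>c b. tideal_endo \<phi> t n (H c b)"
  shows "qtrace (vec_sc \<phi>) (vecs N) (tvecs t n N) (opmat N H) =
    (\<Sum>c<N. qtrace (\<lambda>a x. \<phi> a * x) UNIV (tideal t n) (H c c))"
proof -
  define B where "B = (SOME B. is_dual_basis (\<lambda>a x. \<phi> a * x) UNIV (tideal t n) B)"
  have B: "is_dual_basis (\<lambda>a x. \<phi> a * x) UNIV (tideal t n) B"
    unfolding B_def using R by (rule is_dual_basis_some)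
  have H0: "H c b 0 = 0" for c b
    using H[of c b] unfolding tideal_endo_iff by (blast intro: additive.zero)
  have "qtrace (vec_sc \<phi>) (vecs N) (tvecs t n N) (opmat N H) =
      (\<Sum>(x, g)\<leftarrow>vecs_dual_basis N B. g (opmat N H x))"
    using quotient_module_vecs is_dual_basis_vecs[OF B] quotient_endo_opmat[OF H]
    by (rule qtrace_eq_dual_basis)
  also have "\<dots> = (\<Sum>c<N. \<Sum>(y, f)\<leftarrow>B. f (H c c y))"
    unfolding sum_list_vecs_dual_basis
    by (intro sum.cong refl)
      (simp add: opmat_def H0 if_distrib[where f = "H _ _"] sum.delta cong: if_cong)
  finally show ?thesis
    unfolding qtrace_def Let_def B_def .
qed

section \<open>Atiyah class and residue\<close>

lemma atiyah_eq_opmat: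
  assumes "is_connection \<phi> t n D" "j < n"
  shows "atiyah N d D j = opmat N (\<lambda>i b x. - dcomm D j (d i b) x)"
proof (intro ext)
  fix v i
  have "additive (D j)"
    using assms unfolding is_connection_def additive_def by blast
  then show "atiyah N d D j v i = opmat N (\<lambda>i b x. - dcomm D j (d i b) x) v i"
    unfolding atiyah_def matop_def vecD_def opmat_def dcomm_def
    by (simp add: additive.sum additive.zero sum_subtractf[symmetric])
qed

lemma atiyah_pow_apply:
  assumes con: "is_connection \<phi> t n D" and a: "a < N"
  shows "atiyah_pow N d D n v a = (-1) ^ n * (\<Sum>\<tau> | \<tau> permutes {0..<n}.
    of_int (sign \<tau>) * opmat N (pathsum N (\<lambda>k i b. dcomm D (\<tau> k) (d i b)) n) v a)"
proof -
  have "comp_ops (\<lambda>k. atiyah N d D (\<tau> k)) n v a =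
      (-1) ^ n * opmat N (pathsum N (\<lambda>k i b. dcomm D (\<tau> k) (d i b)) n) v a"
    if \<tau>: "\<tau> permutes {0..<n}" for \<tau>
  proof -
    have \<tau>_lt: "\<tau> k < n" if "k < n" for k
      using \<tau> that permutes_in_image[of \<tau> "{0..<n}" k] by simp
    have add: "additive (dcomm D (\<tau> k) r)" if "k < n" for k r
      using tideal_endo_dcomm[OF con \<tau>_lt[OF that]] unfolding tideal_endo_iff by blast
    have "comp_ops (\<lambda>k. atiyah N d D (\<tau> k)) n =
        comp_ops (\<lambda>k. opmat N (\<lambda>i b x. - dcomm D (\<tau> k) (d i b) x)) n"
      by (intro comp_ops_cong atiyah_eq_opmat[OF con] \<tau>_lt)
    moreover have "\<dots> v a = opmat N (pathsum N (\<lambda>k i b x. - dcomm D (\<tau> k) (d i b) x) n) v a"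
      using add by (intro comp_ops_opmat a) (simp add: additive_def)
    ultimately show ?thesis
      using a add by (simp add: opmat_def pathsum_uminus sum_distrib_left)
  qed
  then show ?thesis
    unfolding atiyah_pow_def by (simp add: sum_distrib_left ac_simps)
qed

definition str_at_entry ::
  "nat \<Rightarrow> nat \<Rightarrow> (nat \<Rightarrow> 'r \<Rightarrow> 'r) \<Rightarrow> (nat \<Rightarrow> bool) \<Rightarrow> (nat \<Rightarrow> nat \<Rightarrow> 'r) \<Rightarrow> (nat \<Rightarrow> nat \<Rightarrow> 'r)
     \<Rightarrow> nat \<Rightarrow> nat \<Rightarrow> 'r \<Rightarrow> 'r::comm_ring_1" where
  "str_at_entry N n D deg d \<alpha> c b x = (if deg c then -1 else 1) * (\<Sum>a<N. \<alpha> c a *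
     (\<Sum>\<tau> | \<tau> permutes {0..<n}. of_int (sign \<tau>) * pathsum N (\<lambda>k i b. dcomm D (\<tau> k) (d i b)) n a b x))"

lemma grading_matop_atiyah_pow_eq_opmat:
  assumes "is_connection \<phi> t n D"
  shows "grading_op deg \<circ> matop N \<alpha> \<circ> atiyah_pow N d D n =
    opmat N (\<lambda>c b x. (-1) ^ n * str_at_entry N n D deg d \<alpha> c b x)"
proof (intro ext)
  fix v c
  let ?P = "{\<tau>. \<tau> permutes {0..<n}}"
  let ?X = "\<lambda>\<tau> a b. of_int (sign \<tau>) * pathsum N (\<lambda>k i b. dcomm D (\<tau> k) (d i b)) n a b (v b)"
  have "(\<Sum>a<N. \<alpha> c a * atiyah_pow N d D n v a) =
      (-1) ^ n * (\<Sum>a<N. \<alpha> c a * (\<Sum>\<tau>\<in>?P. \<Sum>b<N. ?X \<tau> a b))"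
    by (simp add: atiyah_pow_apply[OF assms] opmat_def sum_distrib_left mult.left_commute)
  also have "\<dots> = (-1) ^ n * (\<Sum>a<N. \<Sum>b<N. \<alpha> c a * (\<Sum>\<tau>\<in>?P. ?X \<tau> a b))"
    by (simp only: sum.swap[of _ ?P] sum_distrib_left)
  also have "\<dots> = (-1) ^ n * (\<Sum>b<N. \<Sum>a<N. \<alpha> c a * (\<Sum>\<tau>\<in>?P. ?X \<tau> a b))"
    by (subst sum.swap) (rule refl)
  finally show "(grading_op deg \<circ> matop N \<alpha> \<circ> atiyah_pow N d D n) v c =
      opmat N (\<lambda>c b x. (-1) ^ n * str_at_entry N n D deg d \<alpha> c b x) v c"
    unfolding grading_op_def matop_def opmat_def str_at_entry_def
    by (simp add: sum_distrib_left sum_negf mult.left_commute)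
qed

lemma tideal_endo_str_at_entry:
  assumes "is_connection \<phi> t n D"
  shows "tideal_endo \<phi> t n (str_at_entry N n D deg d \<alpha> c b)"
proof -
  have "\<tau> k < n" if "\<tau> permutes {0..<n}" "k < n" for \<tau> k
    using that permutes_in_image[of \<tau> "{0..<n}" k] by simp
  then show ?thesis
    unfolding str_at_entry_def
    by (intro tideal_endo_mult tideal_endo_sum tideal_endo_pathsum tideal_endo_dcomm[OF assms]) auto
qed

(* The integrand of res_str, with its closed paths p rotated to q = (p\<^sub>1, ..., p\<^sub>n, p\<^sub>0). *)
definition res_str_integrand ::
  "nat \<Rightarrow> nat \<Rightarrow> (nat \<Rightarrow> 'r \<Rightarrow> 'r) \<Rightarrow> (nat \<Rightarrow> bool) \<Rightarrow> (nat \<Rightarrow> nat \<Rightarrow> 'r) \<Rightarrow> (nat \<Rightarrow> nat \<Rightarrow> 'r)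
     \<Rightarrow> 'r \<Rightarrow> 'r::comm_ring_1" where
  "res_str_integrand N n D deg d \<alpha> x = (\<Sum>q\<in>{0..n} \<rightarrow>\<^sub>E {0..<N}. (if deg (q n) then -1 else 1) *
     (\<Sum>\<tau> | \<tau> permutes {0..<n}. of_int (sign \<tau>) *
        (\<alpha> (q n) (q 0) * comp_ops (\<lambda>k. dcomm D (\<tau> k) (d (q k) (q (Suc k)))) n x)))"

lemma sum_PiE_endpoints:
  fixes n N :: nat
  shows "(\<Sum>c<N. \<Sum>a<N. \<Sum>q\<in>{0..n} \<rightarrow>\<^sub>E {0..<N}. if q 0 = a \<and> q n = c then F c a q else 0) =
    (\<Sum>q\<in>{0..n} \<rightarrow>\<^sub>E {0..<N}. (F (q n) (q 0) q :: 'a::comm_monoid_add))"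
proof -
  have "(\<Sum>c<N. \<Sum>a<N. if q 0 = a \<and> q n = c then F c a q else 0) = F (q n) (q 0) q"
    if "q \<in> {0..n} \<rightarrow>\<^sub>E {0..<N}" for q
  proof -
    have "q 0 < N" "q n < N"
      using PiE_mem[OF that, of 0] PiE_mem[OF that, of n] by auto
    then have "(\<Sum>a<N. if q 0 = a \<and> q n = c then F c a q else 0) =
        (if q n = c then F c (q 0) q else 0)" for c
      by (cases "q n = c") (simp_all add: sum.delta')
    with \<open>q n < N\<close> show ?thesis
      by (simp add: sum.delta')
  qed
  then show ?thesis
    by (subst sum.swap, subst (2) sum.swap) simp
qed

lemma sum_str_at_entry_diag:
  "(\<Sum>c<N. str_at_entry N n D deg d \<alpha> c c x) = res_str_integrand N n D deg d \<alpha> x"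
proof -
  let ?P = "{\<tau>. \<tau> permutes {0..<n}}"
  let ?PE = "{0..n} \<rightarrow>\<^sub>E {0..<N}"
  let ?G = "\<lambda>\<tau> c a q. of_int (sign \<tau>) * (\<alpha> c a * ((if deg c then -1 else 1) *
     comp_ops (\<lambda>k. dcomm D (\<tau> k) (d (q k) (q (Suc k)))) n x))"
  have "(\<Sum>c<N. str_at_entry N n D deg d \<alpha> c c x) =
      (\<Sum>\<tau>\<in>?P. \<Sum>c<N. \<Sum>a<N. \<Sum>q\<in>?PE. if q 0 = a \<and> q n = c then ?G \<tau> c a q else 0)"
    unfolding str_at_entry_def pathsum_def
    by (simp add: sum_distrib_left if_distrib[where f = "\<lambda>x. _ * x"] sum.swap[of _ ?P]
        mult.left_commute cong: if_cong)
  also have "\<dots> = (\<Sum>\<tau>\<in>?P. \<Sum>q\<in>?PE. ?G \<tau> (q n) (q 0) q)"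
    by (simp only: sum_PiE_endpoints)
  also have "\<dots> = res_str_integrand N n D deg d \<alpha> x"
    unfolding res_str_integrand_def by (subst sum.swap) (simp add: sum_distrib_left mult.left_commute)
  finally show ?thesis .
qed

lemma sum_PiE_rotate:
  fixes n :: nat
  shows "(\<Sum>p\<in>{0..n} \<rightarrow>\<^sub>E A. G p) =
    (\<Sum>q\<in>{0..n} \<rightarrow>\<^sub>E A. G (\<lambda>k. if k = 0 then q n else if k \<le> n then q (k - 1) else undefined))"
  by (rule sum.reindex_bij_witness[where
        j = "\<lambda>p k. if k < n then p (Suc k) else if k = n then p 0 else undefined" and
        i = "\<lambda>q k. if k = 0 then q n else if k \<le> n then q (k - 1) else undefined"])
    (auto simp: fun_eq_iff PiE_iff extensional_def intro!: arg_cong[where f = G])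

lemma res_str_eq_qtrace:
  fixes \<phi> :: "'s::comm_ring_1 \<Rightarrow> 'r::comm_ring_1"
  assumes rm: "ring_morphism \<phi>" and R: "fg_projective (\<lambda>a x. \<phi> a * x) UNIV (tideal t n)"
  shows "res_str \<phi> t n D N deg d \<alpha> =
    qtrace (\<lambda>a x. \<phi> a * x) UNIV (tideal t n) (res_str_integrand N n D deg d \<alpha>)"
proof -
  let ?tr = "qtrace (\<lambda>a x. \<phi> a * x) UNIV (tideal t n)"
  let ?T = "\<lambda>\<tau> q. comp_ops (\<lambda>k. dcomm D (\<tau> k) (d (q k) (q (Suc k)))) n"
  let ?P = "{\<tau>. \<tau> permutes {0..<n}}"
  let ?rot = "\<lambda>q k. if k = 0 then q n else if k \<le> n then q (k - 1) else undefined"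
  have sign_of_int: "(if b then -1 else 1 :: 'r) = of_int (if b then -1 else 1)" for b
    by simp
  have T: "comp_ops (\<lambda>k. dcomm D (\<tau> k) (map (\<lambda>k. d (?rot q k) (?rot q (if k = n then 0 else Suc k)))
      [1..<Suc n] ! k)) n = ?T \<tau> q" for \<tau> q
    by (rule comp_ops_cong) (simp add: nth_map nth_upt del: upt_Suc)
  have "res_str \<phi> t n D N deg d \<alpha> = (\<Sum>q\<in>{0..n} \<rightarrow>\<^sub>E {0..<N}. of_int (if deg (q n) then -1 else 1) *
      (\<Sum>\<tau>\<in>?P. of_int (sign \<tau>) * ?tr (\<lambda>x. \<alpha> (q n) (q 0) * ?T \<tau> q x)))"
    unfolding res_str_def res_mon_def Let_def
    by (subst sum_PiE_rotate, intro sum.cong refl) (simp only: T, simp)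
  also have "\<dots> = ?tr (res_str_integrand N n D deg d \<alpha>)"
    unfolding res_str_integrand_def sign_of_int
    by (simp only: qtrace_sum[OF R] qtrace_of_int_mult[OF rm R])
  finally show ?thesis .
qed

theorem proposition9p5:
  fixes \<phi> :: "'s::comm_ring_1 \<Rightarrow> 'r::comm_ring_1"
    and t :: "nat \<Rightarrow> 'r" and n :: nat
    and D :: "nat \<Rightarrow> 'r \<Rightarrow> 'r"
    and W :: 's and N :: nat and deg :: "nat \<Rightarrow> bool"
    and d \<alpha> :: "nat \<Rightarrow> nat \<Rightarrow> 'r"
  assumes "ring_morphism \<phi>"
    and "quasi_regular t n"
    and "fg_projective (\<lambda>a x. \<phi> a * x) UNIV (tideal t n)"
    and "is_connection \<phi> t n D"
    and "flat_connection n D"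
    and "\<forall>r. \<exists>a b. r = a + b \<and> (\<forall>j<n. D j a = 0) \<and> b \<in> tideal t n"
    and "is_mf \<phi> W N deg d"
    and "\<forall>a<N. \<forall>b<N. \<alpha> a b \<noteq> 0 \<longrightarrow> (deg a = deg b) = even n"
    and "\<forall>a<N. \<forall>b<N. (-1) ^ n * (\<Sum>c<N. d a c * \<alpha> c b) - (\<Sum>c<N. \<alpha> a c * d c b) \<in> tideal t n"
  shows "qtrace (vec_sc \<phi>) (vecs N) (tvecs t n N)
            (grading_op deg \<circ> matop N \<alpha> \<circ> atiyah_pow N d D n)
         = (-1) ^ n * res_str \<phi> t n D N deg d \<alpha>"
proof -
  note rm = assms(1) and R = assms(3) and con = assms(4)
  let ?trR = "qtrace (\<lambda>a x. \<phi> a * x) UNIV (tideal t n)"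
  have "qtrace (vec_sc \<phi>) (vecs N) (tvecs t n N)
        (grading_op deg \<circ> matop N \<alpha> \<circ> atiyah_pow N d D n) =
      (\<Sum>c<N. ?trR (\<lambda>x. (-1) ^ n * str_at_entry N n D deg d \<alpha> c c x))"
    unfolding grading_matop_atiyah_pow_eq_opmat[OF con]
    by (rule qtrace_opmat[OF R]) (intro tideal_endo_mult tideal_endo_str_at_entry[OF con])
  also have "\<dots> = ?trR (\<lambda>x. (-1) ^ n * res_str_integrand N n D deg d \<alpha> x)"
    by (simp add: qtrace_sum[OF R, symmetric] sum_distrib_left[symmetric] sum_str_at_entry_diag)
  also have "\<dots> = (-1) ^ n * res_str \<phi> t n D N deg d \<alpha>"
    using qtrace_of_int_mult[OF rm R, of "(-1) ^ n"] by (simp add: res_str_eq_qtrace[OF rm R])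
  finally show ?thesis .
qed

end
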